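(* Let $K$ be a field, $\mathcal A$ a $K$-algebra and $V$ a $K$-subspace of $\mathcal A$. Then the following two statements are equivalent: (1) every element of $\sqrt V$ which is algebraic over $K$ is either nilpotent or invertible in $\mathcal A$; (2) $V$ contains no non-trivial idempotent of $\mathcal A$.
   Context: All algebras are associative with identity $1$ (not necessarily commutative). For a subset $S\subseteq\mathcal A$, the radical $\sqrt S$ is the set of $a\in\mathcal A$ such that $a^m\in S$ for all sufficiently large $m$. An idempotent is an element $e$ with $e^2=e$; it is non-trivial if $e\neq 0$ and $e\neq 1$. *)

theory Defs
  imports Main "HOL-Computational_Algebra.Polynomial"
begin

definition algebra_over :: "('k::field \<Rightarrow> 'a::ring_1 \<Rightarrow> 'a) \<Rightarrow> bool" where
  "algebra_over scale \<longleftrightarrow> module scale \<and>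
     (\<forall>c x y. scale c (x * y) = scale c x * y) \<and>
     (\<forall>c x y. scale c (x * y) = x * scale c y)"

definition poly_eval :: "('k::field \<Rightarrow> 'a::ring_1 \<Rightarrow> 'a) \<Rightarrow> 'k poly \<Rightarrow> 'a \<Rightarrow> 'a" where
  "poly_eval scale p a = (\<Sum>i\<le>degree p. scale (coeff p i) (a ^ i))"

definition algebraic_over :: "('k::field \<Rightarrow> 'a::ring_1 \<Rightarrow> 'a) \<Rightarrow> 'a \<Rightarrow> bool" where
  "algebraic_over scale a \<longleftrightarrow> (\<exists>p. p \<noteq> 0 \<and> poly_eval scale p a = 0)"

definition radical :: "'a::monoid_mult set \<Rightarrow> 'a set" where
  "radical S = {a. \<exists>N. \<forall>m\<ge>N. a ^ m \<in> S}"

definition nilpotent :: "'a::{zero,monoid_mult} \<Rightarrow> bool" where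
  "nilpotent a \<longleftrightarrow> (\<exists>n. a ^ n = 0)"

definition invertible_elem :: "'a::monoid_mult \<Rightarrow> bool" where
  "invertible_elem a \<longleftrightarrow> (\<exists>b. a * b = 1 \<and> b * a = 1)"

definition nontrivial_idempotent :: "'a::ring_1 \<Rightarrow> bool" where
  "nontrivial_idempotent e \<longleftrightarrow> e * e = e \<and> e \<noteq> 0 \<and> e \<noteq> 1"

end

theory Submission
  imports Defs
begin

text \<open>Evaluation at an element \<open>a\<close> is a ring homomorphism \<open>K[X] \<rightarrow> \<A>\<close> whose image is
  commutative. For (1) \<Rightarrow> (2), a non-trivial idempotent of \<open>V\<close> lies in \<open>\<surd>V\<close>, is annihilated by
  \<open>X\<^sup>2 - X\<close>, and is neither nilpotent nor invertible. For (2) \<Rightarrow> (1), let \<open>p(a) = 0\<close> with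
  \<open>p = X\<^sup>k q\<close>, \<open>q(0) \<noteq> 0\<close>. For large \<open>M\<close> write \<open>1 = u X\<^sup>M + v q\<close>; then \<open>e = a\<^sup>M u(a)\<close> lies in \<open>V\<close>,
  and \<open>e\<close> and \<open>1 - e = (vq)(a)\<close> are orthogonal because \<open>X\<^sup>M q\<close> is a multiple of \<open>p\<close>. So \<open>e\<close> is
  an idempotent of \<open>V\<close>: \<open>e = 0\<close> forces \<open>a\<^sup>k = a\<^sup>k (vq)(a) = 0\<close>, and \<open>e = 1\<close> makes \<open>a\<close> invertible.\<close>

lemma idempotent_power:
  fixes e :: "'a::monoid_mult"
  assumes "e * e = e" and "n \<noteq> 0"
  shows "e ^ n = e"
  using assms(2)
proof (induction n)
  case (Suc n)
  then show ?case
    using assms(1) by (cases n) auto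
qed simp

lemma idempotent_in_radical:
  fixes e :: "'a::monoid_mult"
  assumes "e * e = e" and "e \<in> S"
  shows "e \<in> radical S"
  unfolding radical_def using assms idempotent_power [OF assms(1)] by (auto intro!: exI [of _ 1])

lemma nontrivial_idempotent_not_nilpotent:
  assumes "nontrivial_idempotent e"
  shows "\<not> nilpotent e"
proof
  assume "nilpotent e"
  then obtain n where "e ^ n = 0"
    by (auto simp: nilpotent_def)
  moreover have "e ^ n \<noteq> 0"
    using assms idempotent_power [of e n] by (cases "n = 0") (auto simp: nontrivial_idempotent_def)
  ultimately show False
    by contradiction
qed

lemma nontrivial_idempotent_not_invertible:
  assumes "nontrivial_idempotent e"
  shows "\<not> invertible_elem e"
proof
  assume "invertible_elem e"
  then obtain b where "e * b = 1"
    by (auto simp: invertible_elem_def)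
  then have "e = 1"
    using assms by (metis mult.assoc mult.right_neutral nontrivial_idempotent_def)
  then show False
    using assms by (simp add: nontrivial_idempotent_def)
qed

lemma invertible_if_power_mult_eq_one:
  fixes a :: "'a::monoid_mult"
  assumes "a ^ Suc n * b = 1" and "b * a = a * b"
  shows "invertible_elem a"
proof -
  have "a * (a ^ n * b) = 1"
    using assms(1) by (simp add: mult.assoc)
  moreover have "a ^ n * b * a = 1"
    using assms by (metis mult.assoc power_Suc2 power_commutes)
  ultimately show ?thesis
    unfolding invertible_elem_def by blast
qed

locale field_algebra = module scale for scale :: "'k::field \<Rightarrow> 'a::ring_1 \<Rightarrow> 'a" +
  assumes scale_mult_left: "scale c (x * y) = scale c x * y"
    and scale_mult_right: "scale c (x * y) = x * scale c y"

lemma field_algebra_iff_algebra_over: "field_algebra scale \<longleftrightarrow> algebra_over scale"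
  by (simp add: algebra_over_def field_algebra_def field_algebra_axioms_def)

lemma X_power_bezout:
  fixes q :: "'k::field poly"
  assumes "\<not> [:0, 1:] dvd q"
  shows "\<exists>u v. u * [:0, 1:] ^ M + v * q = 1"
proof -
  obtain c r where q: "q = pCons c r"
    by (cases q) auto
  have "c \<noteq> 0"
    using assms by (simp add: dvd_iff_poly_eq_0 q)
  define t where "t = - ([:0, 1:] * smult (1 / c) r)"
  have q_normed: "smult (1 / c) q = 1 - t"
    using \<open>c \<noteq> 0\<close> by (simp add: q t_def one_pCons smult_add_right)
  text \<open>Inverting the unit \<open>1 - t\<close> modulo \<open>X\<^sup>M\<close> by a truncated geometric series.\<close>
  have "1 - t ^ M = (1 - t) * (\<Sum>i<M. t ^ i)"
    by (rule one_diff_power_eq)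
  also have "t ^ M = [:0, 1:] ^ M * (- smult (1 / c) r) ^ M"
    by (simp add: t_def power_mult_distrib [symmetric])
  finally have "1 = (- smult (1 / c) r) ^ M * [:0, 1:] ^ M + smult (1 / c) (\<Sum>i<M. t ^ i) * q"
    by (simp add: q_normed [symmetric] algebra_simps)
  then show ?thesis
    by metis
qed

context field_algebra
begin

lemma poly_eval_eq_sum_lessThan:
  assumes "degree p < n"
  shows "poly_eval scale p a = (\<Sum>i<n. scale (coeff p i) (a ^ i))"
proof -
  have "poly_eval scale p a = (\<Sum>i<Suc (degree p). scale (coeff p i) (a ^ i))"
    unfolding poly_eval_def by (simp add: lessThan_Suc_atMost)
  also have "\<dots> = (\<Sum>i<n. scale (coeff p i) (a ^ i))"
    by (rule sum.mono_neutral_left) (use assms in \<open>auto simp: coeff_eq_0\<close>)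
  finally show ?thesis .
qed

lemma poly_eval_0 [simp]: "poly_eval scale 0 a = 0"
  by (simp add: poly_eval_def)

lemma poly_eval_pCons: "poly_eval scale (pCons c p) a = scale c 1 + a * poly_eval scale p a"
proof -
  have "degree (pCons c p) < Suc (Suc (degree p))"
    by (metis degree_pCons_le le_imp_less_Suc)
  then have "poly_eval scale (pCons c p) a
      = (\<Sum>i<Suc (Suc (degree p)). scale (coeff (pCons c p) i) (a ^ i))"
    by (rule poly_eval_eq_sum_lessThan)
  also have "\<dots> = scale c 1 + (\<Sum>i<Suc (degree p). scale (coeff p i) (a * a ^ i))"
    by (subst sum.lessThan_Suc_shift) simp
  also have "\<dots> = scale c 1 + a * (\<Sum>i<Suc (degree p). scale (coeff p i) (a ^ i))"
    by (simp add: scale_mult_right sum_distrib_left del: sum.lessThan_Suc)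
  also have "(\<Sum>i<Suc (degree p). scale (coeff p i) (a ^ i)) = poly_eval scale p a"
    by (rule poly_eval_eq_sum_lessThan [symmetric]) simp
  finally show ?thesis .
qed

lemma poly_eval_add: "poly_eval scale (p + q) a = poly_eval scale p a + poly_eval scale q a"
proof -
  define n where "n = Suc (max (degree p) (degree q))"
  have "degree (p + q) < n" "degree p < n" "degree q < n"
    by (auto simp: n_def less_Suc_eq_le intro: degree_add_le)
  then show ?thesis
    by (simp add: poly_eval_eq_sum_lessThan scale_left_distrib sum.distrib)
qed

lemma poly_eval_smult: "poly_eval scale (smult c p) a = scale c (poly_eval scale p a)"
  by (induction p) (simp_all add: poly_eval_pCons scale_right_distrib scale_mult_right)

lemma poly_eval_mult: "poly_eval scale (p * q) a = poly_eval scale p a * poly_eval scale q a"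
proof (induction p)
  case (pCons c p)
  have "poly_eval scale (pCons c p * q) a
      = scale c (poly_eval scale q a) + a * poly_eval scale (p * q) a"
    by (simp add: poly_eval_add poly_eval_smult poly_eval_pCons)
  also have "\<dots> = (scale c 1 + a * poly_eval scale p a) * poly_eval scale q a"
    using pCons by (simp add: distrib_right mult.assoc scale_mult_left [symmetric])
  finally show ?case by (simp add: poly_eval_pCons)
qed simp

lemma poly_eval_1 [simp]: "poly_eval scale 1 a = 1"
  by (simp add: one_pCons poly_eval_pCons)

lemma poly_eval_X [simp]: "poly_eval scale [:0, 1:] a = a"
  by (simp add: one_pCons poly_eval_pCons)

lemma poly_eval_X_power [simp]: "poly_eval scale ([:0, 1:] ^ k) a = a ^ k"
  by (induction k) (simp_all add: poly_eval_pCons)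

lemma poly_eval_commute:
  "poly_eval scale p a * poly_eval scale q a = poly_eval scale q a * poly_eval scale p a"
  by (metis poly_eval_mult mult.commute)

lemma idempotent_algebraic:
  assumes "e * e = e"
  shows "algebraic_over scale e"
proof -
  have "poly_eval scale [:0, -1, 1:] e = 0"
    using assms by (simp add: poly_eval_pCons scale_minus_left algebra_simps)
  moreover have "[:0, -1, 1::'k:] \<noteq> 0"
    by simp
  ultimately show ?thesis
    unfolding algebraic_over_def by blast
qed

lemma power_mult_poly_eval_in_subspace:
  assumes "subspace V" and "\<forall>m\<ge>N. a ^ m \<in> V"
  shows "a ^ N * poly_eval scale u a \<in> V"
proof -
  have "a ^ N * poly_eval scale u a = (\<Sum>i\<le>degree u. scale (coeff u i) (a ^ (N + i)))"
    by (simp add: poly_eval_def sum_distrib_left scale_mult_right [symmetric] power_add)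
  also have "\<dots> \<in> V"
    using assms by (intro subspace_sum) (auto simp: subspace_def)
  finally show ?thesis .
qed

text \<open>\<open>M\<close> may be any bound above the order of \<open>X\<close> in \<open>p\<close>, so that \<open>a\<^sup>M\<close> can also be
  pushed into \<open>V\<close>.\<close>

lemma algebraic_splitting_idempotent:
  assumes "p \<noteq> 0" and "poly_eval scale p a = 0" and "order 0 p < M"
  obtains u where "a ^ M * poly_eval scale u a * (a ^ M * poly_eval scale u a)
      = a ^ M * poly_eval scale u a"
    and "a ^ M * poly_eval scale u a = 0 \<Longrightarrow> nilpotent a"
proof -
  define k where "k = order 0 p"
  obtain q where pq: "p = [:0, 1:] ^ k * q" and q: "\<not> [:0, 1:] dvd q"
    using order_decomp [OF assms(1), of 0] by (auto simp: k_def)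
  obtain u v where uv: "u * [:0, 1::'k:] ^ M + v * q = 1"
    using X_power_bezout [OF q] by blast
  define e where "e = a ^ M * poly_eval scale u a"
  define f where "f = poly_eval scale (v * q) a"
  have e_eval: "e = poly_eval scale (u * [:0, 1:] ^ M) a"
    unfolding e_def by (simp add: poly_eval_mult poly_eval_commute [of _ _ "[:0, 1:] ^ M", simplified])
  have sum: "e + f = 1"
    unfolding e_eval f_def by (metis uv poly_eval_add poly_eval_1)
  have "[:0, 1::'k:] ^ M = [:0, 1:] ^ (M - k) * [:0, 1:] ^ k"
    using assms(3) by (simp add: k_def power_add [symmetric])
  then have "u * [:0, 1:] ^ M * (v * q) = (u * v * [:0, 1:] ^ (M - k)) * p"
    by (simp add: pq algebra_simps)
  then have orth: "e * f = 0"
    unfolding e_eval f_def by (metis poly_eval_mult assms(2) mult_zero_right)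
  have "e * e = e * (e + f)"
    using orth by (simp add: distrib_left)
  then have "e * e = e"
    using sum by simp
  moreover have "nilpotent a" if "e = 0"
  proof -
    have "a ^ k = a ^ k * f"
      using sum that by simp
    also have "\<dots> = poly_eval scale ([:0, 1:] ^ k * q * v) a"
      unfolding f_def by (simp add: poly_eval_mult poly_eval_commute [of v _ q] mult.assoc)
    also have "\<dots> = 0"
      using assms(2) pq by (simp add: poly_eval_mult)
    finally show ?thesis
      by (auto simp: nilpotent_def)
  qed
  ultimately show thesis
    using that unfolding e_def by blast
qed

lemma radical_algebraic_nilpotent_or_invertible:
  assumes "subspace V" and no_idem: "\<not> (\<exists>e\<in>V. nontrivial_idempotent e)"
    and "a \<in> radical V" and "algebraic_over scale a"
  shows "nilpotent a \<or> invertible_elem a"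
proof -
  obtain N p where N: "\<forall>m\<ge>N. a ^ m \<in> V" and "p \<noteq> 0" and "poly_eval scale p a = 0"
    using assms(3,4) by (auto simp: radical_def algebraic_over_def)
  define n where "n = max N (order 0 p)"
  have order_less: "order 0 p < Suc n"
    by (simp add: n_def)
  obtain u where idem: "a ^ Suc n * poly_eval scale u a * (a ^ Suc n * poly_eval scale u a)
      = a ^ Suc n * poly_eval scale u a"
    and nil: "a ^ Suc n * poly_eval scale u a = 0 \<Longrightarrow> nilpotent a"
    using algebraic_splitting_idempotent [OF \<open>p \<noteq> 0\<close> \<open>poly_eval scale p a = 0\<close> order_less]
    by blast
  have "a ^ Suc n * poly_eval scale u a \<in> V"
    using power_mult_poly_eval_in_subspace [OF assms(1), of "Suc n" a] N by (simp add: n_def)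
  with no_idem idem have "a ^ Suc n * poly_eval scale u a = 0 \<or> a ^ Suc n * poly_eval scale u a = 1"
    by (auto simp: nontrivial_idempotent_def)
  moreover have "poly_eval scale u a * a = a * poly_eval scale u a"
    using poly_eval_commute [of u a "[:0, 1:]"] by simp
  ultimately show ?thesis
    using nil invertible_if_power_mult_eq_one [of a n] by blast
qed

end


theorem theorem3p5:
  fixes scale :: "'k::field \<Rightarrow> 'a::ring_1 \<Rightarrow> 'a"
    and V :: "'a set"
  assumes "algebra_over scale"
    and "module.subspace scale V"
  shows "(\<forall>a\<in>radical V. algebraic_over scale a \<longrightarrow> nilpotent a \<or> invertible_elem a)
     \<longleftrightarrow> \<not> (\<exists>e\<in>V. nontrivial_idempotent e)"
proof -
  interpret field_algebra scale
    using assms(1) by (simp add: field_algebra_iff_algebra_over)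
  have "\<not> (\<exists>e\<in>V. nontrivial_idempotent e)"
    if H: "\<forall>a\<in>radical V. algebraic_over scale a \<longrightarrow> nilpotent a \<or> invertible_elem a"
  proof
    assume "\<exists>e\<in>V. nontrivial_idempotent e"
    then obtain e where "e \<in> V" and e: "nontrivial_idempotent e"
      by blast
    then have "e \<in> radical V" and "algebraic_over scale e"
      by (auto simp: nontrivial_idempotent_def intro: idempotent_in_radical idempotent_algebraic)
    with H e show False
      using nontrivial_idempotent_not_nilpotent nontrivial_idempotent_not_invertible by blast
  qed
  moreover have "nilpotent a \<or> invertible_elem a"
    if "\<not> (\<exists>e\<in>V. nontrivial_idempotent e)" and "a \<in> radical V" and "algebraic_over scale a"
    for a
    using radical_algebraic_nilpotent_or_invertible [OF assms(2)] that by blast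
  ultimately show ?thesis
    by blast
qed

end
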